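(* Let $C$ be an $(n,k)$-code and $0\le d\le k$. Then $C$ is $\operatorname{rMDS}_d(2)$ if and only if $C^\perp$ is $\operatorname{rMDS}^d(2)$.
   Context: For a $k'\times n$ matrix $V$ and $A_1,\dots,A_\ell\subseteq[n]$, $\mathcal G_{A_1,\dots,A_\ell}[V]$ is the $\ell k'\times(k'+\sum|A_i|)$ block matrix whose $i$-th block row has $I_{k'}$ in the first block column and $V|_{A_i}$ (columns of $V$ in $A_i$) in block column $i+1$. A generic matrix has independent indeterminate entries. An $(n,k')$-code with generator matrix $V$ is $\operatorname{rMDS}_d(\ell)$ ($0\le d\le k'$) if $\mathcal G_{A_1,\dots,A_\ell}[V]$ has full column rank whenever $\mathcal G_{A_1,\dots,A_\ell}[W]$ does, for $W$ a generic $(k'-d)\times n$ matrix. Sets are $V$-saturated if $\operatorname{rank}\mathcal G_{A_1,\dots,A_\ell}[V]=\ell k'$, and have the $m$-dimensional saturation property if they are $W$-saturated for a generic $m\times n$ $W$. An $(n,k')$-code with generator matrix $V$ is $\operatorname{rMDS}^d(\ell)$ ($0\le d\le n-k'$) if every family with the $(k'+d)$-dimensional saturation property is $V$-saturated. *)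

theory Defs
  imports "Jordan_Normal_Form.DL_Rank" "HOL-Library.Poly_Mapping"
    "HOL-Computational_Algebra.Fraction_Field"
begin

definition mrank :: "'a::field mat \<Rightarrow> nat" where
  "mrank M = vec_space.rank (dim_row M) M"

definition full_col_rank :: "'a::field mat \<Rightarrow> bool" where
  "full_col_rank M \<longleftrightarrow> mrank M = dim_col M"

text \<open>Column offset of block column j+1 (0-based block j of the sets):
  kk + |A_0| + ... + |A_(j-1)|.\<close>
definition blk_off :: "nat \<Rightarrow> nat set list \<Rightarrow> nat \<Rightarrow> nat" where
  "blk_off kk As j = kk + (\<Sum>i<j. card (As ! i))"

text \<open>The block matrix G_{A_1,...,A_l}[V] for a kk x n matrix V: block row i has the
  identity I_kk in the first block column and V restricted to the columns in A_i
  (in increasing order) in block column i+1; all other blocks are zero.\<close>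
definition Gmat :: "'a::{zero,one} mat \<Rightarrow> nat set list \<Rightarrow> 'a mat" where
  "Gmat V As = (let kk = dim_row V; l = length As in
     mat (l * kk) (blk_off kk As l)
       (\<lambda>(r, c). let i = r div kk; a = r mod kk in
          if c < kk then (if c = a then 1 else 0)
          else if blk_off kk As i \<le> c \<and> c < blk_off kk As (Suc i)
          then V $$ (a, sorted_list_of_set (As ! i) ! (c - blk_off kk As i))
          else 0))"

text \<open>Generic m x n matrix over a field 'a: its entries are distinct independent
  indeterminates X_(i*n+j), viewed in the field of rational functions
  Frac('a[X_0, X_1, ...]).\<close>
definition generic_mat :: "nat \<Rightarrow> nat \<Rightarrow> ((nat \<Rightarrow>\<^sub>0 nat) \<Rightarrow>\<^sub>0 'a::field) fract mat" where
  "generic_mat m n = mat m n (\<lambda>(i, j).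
      Fract (Poly_Mapping.single (Poly_Mapping.single (i * n + j) 1) 1) 1)"

definition rMDS_sub2 :: "nat \<Rightarrow> 'a::field mat \<Rightarrow> bool" where
  "rMDS_sub2 d V \<longleftrightarrow>
     (\<forall>A1 A2. A1 \<subseteq> {..<dim_col V} \<longrightarrow> A2 \<subseteq> {..<dim_col V} \<longrightarrow>
        full_col_rank (Gmat (generic_mat (dim_row V - d) (dim_col V) :: ((nat \<Rightarrow>\<^sub>0 nat) \<Rightarrow>\<^sub>0 'a) fract mat) [A1, A2])
        \<longrightarrow> full_col_rank (Gmat V [A1, A2]))"

definition saturated :: "'a::field mat \<Rightarrow> nat set list \<Rightarrow> bool" where
  "saturated V As \<longleftrightarrow> mrank (Gmat V As) = length As * dim_row V"

definition sat_prop :: "'a::field itself \<Rightarrow> nat \<Rightarrow> nat \<Rightarrow> nat set list \<Rightarrow> bool" where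
  "sat_prop _ m n As \<longleftrightarrow>
     saturated (generic_mat m n :: ((nat \<Rightarrow>\<^sub>0 nat) \<Rightarrow>\<^sub>0 'a) fract mat) As"

definition rMDS_sup2 :: "nat \<Rightarrow> 'a::field mat \<Rightarrow> bool" where
  "rMDS_sup2 d V \<longleftrightarrow>
     (\<forall>A1 A2. A1 \<subseteq> {..<dim_col V} \<longrightarrow> A2 \<subseteq> {..<dim_col V} \<longrightarrow>
        sat_prop TYPE('a) (dim_row V + d) (dim_col V) [A1, A2]
        \<longrightarrow> saturated V [A1, A2])"

end

theory Submission
  imports Defs
begin

text \<open>For two sets the block matrix \<open>G[M]\<close> of \<open>A\<^sub>1, A\<^sub>2\<close> has full column rank exactly when
  \<open>A\<^sub>1\<close> and \<open>A\<^sub>2\<close> are disjoint and the columns of \<open>M\<close> indexed by \<open>A\<^sub>1 \<union> A\<^sub>2\<close> are linearly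
  independent, and it has full row rank exactly when these columns span. For a generic
  \<open>m \<times> n\<close> matrix every maximal minor is a nonzero polynomial, so the two conditions become
  \<open>|A\<^sub>1 \<union> A\<^sub>2| \<le> m\<close> and \<open>|A\<^sub>1 \<union> A\<^sub>2| \<ge> m\<close>. Hence \<open>rMDS\<^sub>d(2)\<close> for \<open>V\<close> says that every set of at
  most \<open>k - d\<close> columns of \<open>V\<close> is independent, and \<open>rMDS\<^sup>d(2)\<close> for the parity-check matrix
  \<open>H\<close> says that every set of at least \<open>n - k + d\<close> columns of \<open>H\<close> spans. Passing to
  complements, these are equivalent because the columns of \<open>V\<close> indexed by \<open>T\<close> are independent
  iff the columns of \<open>H\<close> outside \<open>T\<close> span: if \<open>y\<close> is orthogonal to the columns of \<open>H\<close> outside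
  \<open>T\<close>, then \<open>H\<^sup>T y\<close> is supported on \<open>T\<close> and lies in the kernel of \<open>V\<close>; the converse follows by
  exchanging the roles of \<open>V\<close> and \<open>H\<close> and counting dimensions.\<close>

lemma mult_unit_vec_eq_col:
  fixes A :: "'a::semiring_1 mat"
  assumes "A \<in> carrier_mat m c" and "j < c"
  shows "A *\<^sub>v unit_vec c j = col A j"
  using assms by (intro eq_vecI) (auto simp: scalar_prod_right_unit[of j c])

lemma mult_mat_vec_zero:
  fixes A :: "'a::semiring_0 mat"
  shows "A \<in> carrier_mat nr nc \<Longrightarrow> A *\<^sub>v 0\<^sub>v nc = 0\<^sub>v nr"
  by (intro eq_vecI) auto

lemma index_mult_mat_vec_sum:
  assumes "M \<in> carrier_mat k N" and "i < k" and "x \<in> carrier_vec N"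
  shows "(M *\<^sub>v x) $ i = (\<Sum>j<N. M $$ (i, j) * x $ j)"
  using assms unfolding mult_mat_vec_def scalar_prod_def by (auto simp: atLeast0LessThan)

lemma mult_mat_vec_scalar_prod:
  fixes A :: "'a::comm_ring mat"
  assumes A: "A \<in> carrier_mat m c" and x: "x \<in> carrier_vec c" and y: "y \<in> carrier_vec m"
  shows "(A *\<^sub>v x) \<bullet> y = (\<Sum>l<c. x $ l * (col A l \<bullet> y))"
proof -
  have "(A *\<^sub>v x) \<bullet> y = (transpose_mat A *\<^sub>v y) \<bullet> x"
    using transpose_vec_mult_scalar[OF A x y] comm_scalar_prod[OF mult_mat_vec_carrier[OF A x] y]
    by simp
  also have "\<dots> = (\<Sum>l<c. (transpose_mat A *\<^sub>v y) $ l * x $ l)"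
    using x unfolding scalar_prod_def[of _ x] by (simp add: lessThan_atLeast0)
  also have "\<dots> = (\<Sum>l<c. x $ l * (col A l \<bullet> y))"
    using A by (intro sum.cong) (auto simp: mult.commute)
  finally show ?thesis .
qed

lemma zero_vec_add_eq_append: "0\<^sub>v (a + b) = 0\<^sub>v a @\<^sub>v 0\<^sub>v b"
  by (intro eq_vecI) auto

lemma append_vec3_eq_0_iff:
  assumes "u \<in> carrier_vec a" and "v \<in> carrier_vec b" and "w \<in> carrier_vec c"
  shows "u @\<^sub>v v @\<^sub>v w = 0\<^sub>v (a + b + c) \<longleftrightarrow> u = 0\<^sub>v a \<and> v = 0\<^sub>v b \<and> w = 0\<^sub>v c"
proof -
  have "u @\<^sub>v v @\<^sub>v w = 0\<^sub>v (a + b + c) \<longleftrightarrow> u @\<^sub>v v @\<^sub>v w = 0\<^sub>v a @\<^sub>v 0\<^sub>v b @\<^sub>v 0\<^sub>v c"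
    by (simp only: add.assoc zero_vec_add_eq_append)
  also have "u @\<^sub>v v @\<^sub>v w = 0\<^sub>v a @\<^sub>v 0\<^sub>v b @\<^sub>v 0\<^sub>v c \<longleftrightarrow> u = 0\<^sub>v a \<and> v @\<^sub>v w = 0\<^sub>v b @\<^sub>v 0\<^sub>v c"
    by (rule append_vec_eq[OF assms(1) zero_carrier_vec])
  finally show ?thesis
    using append_vec_eq[OF assms(2) zero_carrier_vec] by simp
qed

lemma obtain_append_vec3:
  assumes "x \<in> carrier_vec (a + b + c)"
  obtains u v w where "u \<in> carrier_vec a" "v \<in> carrier_vec b" "w \<in> carrier_vec c"
    and "x = u @\<^sub>v v @\<^sub>v w"
proof -
  have "x \<in> carrier_vec (a + (b + c))"
    using assms by (simp add: add.assoc)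
  then have "x = vec_first x a @\<^sub>v vec_first (vec_last x (b + c)) b @\<^sub>v vec_last (vec_last x (b + c)) c"
    by (metis vec_first_last_append vec_last_carrier)
  then show thesis
    by (rule that[OF vec_first_carrier vec_first_carrier vec_last_carrier])
qed

lemma minus_eq_0_vec_iff:
  fixes a b :: "'a::ab_group_add vec"
  shows "a \<in> carrier_vec n \<Longrightarrow> b \<in> carrier_vec n \<Longrightarrow> a - b = 0\<^sub>v n \<longleftrightarrow> a = b"
  by (auto simp: vec_eq_iff)

context vec_space
begin

lemma exists_maximal_lin_indpt_cols: "\<exists>S. maximal S (\<lambda>T. T \<subseteq> set (cols A) \<and> lin_indpt T)"
  using maximal_exists[of "\<lambda>T. T \<subseteq> set (cols A) \<and> lin_indpt T" "card (set (cols A))" "{}"]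
  by (meson List.finite_set card_mono empty_iff empty_subsetI finite_lin_indpt2 rev_finite_subset)

lemma rank_le_nr:
  assumes A: "A \<in> carrier_mat n nc"
  shows "rank A \<le> n"
proof -
  have "set (cols A) \<subseteq> carrier_vec n"
    using A cols_dim[of A] by simp
  then have "vectorspace.dim class_ring (vs (span (set (cols A)))) \<le> dim"
    by (rule subspace_dim[OF span_is_subspace _ fin_dim_span_cols[OF A]]) simp
  then show ?thesis unfolding rank_def dim_is_n .
qed

lemma rank_eq_nc_iff:
  assumes A: "A \<in> carrier_mat n nc"
  shows "rank A = nc \<longleftrightarrow> (\<forall>v\<in>carrier_vec nc. A *\<^sub>v v = 0\<^sub>v n \<longrightarrow> v = 0\<^sub>v nc)"
proof
  assume r: "rank A = nc"
  have "distinct (cols A)"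
  proof (rule ccontr)
    assume "\<not> distinct (cols A)"
    then have "card (set (cols A)) < nc"
      using A card_distinct card_length le_neq_implies_less by (metis carrier_matD(2) cols_length)
    obtain S where S: "maximal S (\<lambda>T. T \<subseteq> set (cols A) \<and> lin_indpt T)"
      using exists_maximal_lin_indpt_cols by blast
    then have "card S \<le> card (set (cols A))"
      by (simp add: card_mono maximal_def)
    with \<open>card (set (cols A)) < nc\<close> show False
      using rank_card_indpt[OF A S] r by simp
  qed
  with full_rank_lin_indpt[OF A r] show "\<forall>v\<in>carrier_vec nc. A *\<^sub>v v = 0\<^sub>v n \<longrightarrow> v = 0\<^sub>v nc"
    using lin_depI[OF A] by blast
next
  assume inj: "\<forall>v\<in>carrier_vec nc. A *\<^sub>v v = 0\<^sub>v n \<longrightarrow> v = 0\<^sub>v nc"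
  have "distinct (cols A)"
  proof (rule ccontr)
    assume "\<not> distinct (cols A)"
    then obtain i j where ij: "i \<noteq> j" "i < nc" "j < nc" "col A i = col A j"
      using A distinct_conv_nth[of "cols A"] by auto
    define v :: "'a vec" where "v = unit_vec nc i - unit_vec nc j"
    have "v \<in> carrier_vec nc" "v $ i = 1"
      using ij unfolding v_def by auto
    moreover have "A *\<^sub>v v = 0\<^sub>v n"
      using A ij unfolding v_def
      by (simp add: mult_minus_distrib_mat_vec mult_unit_vec_eq_col)
    ultimately have "v = 0\<^sub>v nc"
      using inj by blast
    then show False
      using \<open>v $ i = 1\<close> ij(2) by simp
  qed
  moreover have "\<not> lin_dep (set (cols A))"
    using lin_depE[OF A _ \<open>distinct (cols A)\<close>] inj by metis
  ultimately show "rank A = nc"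
    using lin_indpt_full_rank[OF A] by blast
qed

lemma rank_eq_nr_iff:
  assumes A: "A \<in> carrier_mat n nc"
  shows "rank A = n \<longleftrightarrow> (\<forall>b\<in>carrier_vec n. \<exists>v\<in>carrier_vec nc. A *\<^sub>v v = b)"
proof -
  have cols: "set (cols A) \<subseteq> carrier_vec n"
    using A cols_dim[of A] by simp
  have span: "span (set (cols A)) = {b \<in> carrier_vec n. \<exists>v\<in>carrier_vec nc. A *\<^sub>v v = b}"
    using col_space_eq[OF A] A unfolding col_space_def by simp
  show ?thesis
  proof
    assume r: "rank A = n"
    obtain S where S: "maximal S (\<lambda>T. T \<subseteq> set (cols A) \<and> lin_indpt T)"
      using exists_maximal_lin_indpt_cols by blast
    then have SA: "S \<subseteq> set (cols A)" "lin_indpt S"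
      unfolding maximal_def by auto
    then have "finite S" "S \<subseteq> carrier_vec n"
      using cols finite_subset by auto
    moreover have "card S = n"
      using rank_card_indpt[OF A S] r by simp
    ultimately have "basis S"
      using dim_li_is_basis[OF fin_dim] SA(2) dim_is_n by simp
    then have "carrier_vec n \<subseteq> span (set (cols A))"
      using span_is_monotone[OF SA(1)] unfolding basis_def by simp
    then show "\<forall>b\<in>carrier_vec n. \<exists>v\<in>carrier_vec nc. A *\<^sub>v v = b"
      using span by auto
  next
    assume "\<forall>b\<in>carrier_vec n. \<exists>v\<in>carrier_vec nc. A *\<^sub>v v = b"
    then have "span (set (cols A)) = carrier_vec n"
      using span by auto
    then have "span_vs (set (cols A)) = V"
      by simp
    then show "rank A = n"
      unfolding rank_def using dim_is_n by simp
  qed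
qed

end

definition inj_mat :: "'a::semiring_0 mat \<Rightarrow> bool" where
  "inj_mat A \<longleftrightarrow>
     (\<forall>v\<in>carrier_vec (dim_col A). A *\<^sub>v v = 0\<^sub>v (dim_row A) \<longrightarrow> v = 0\<^sub>v (dim_col A))"

definition surj_mat :: "'a::semiring_0 mat \<Rightarrow> bool" where
  "surj_mat A \<longleftrightarrow> (\<forall>b\<in>carrier_vec (dim_row A). \<exists>v\<in>carrier_vec (dim_col A). A *\<^sub>v v = b)"

lemma full_col_rank_iff_inj_mat:
  fixes A :: "'a::field mat"
  shows "full_col_rank A \<longleftrightarrow> inj_mat A"
  unfolding full_col_rank_def mrank_def inj_mat_def
  by (rule vec_space.rank_eq_nc_iff) simp

lemma mrank_eq_dim_row_iff_surj_mat:
  fixes A :: "'a::field mat"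
  shows "mrank A = dim_row A \<longleftrightarrow> surj_mat A"
  unfolding mrank_def surj_mat_def
  by (rule vec_space.rank_eq_nr_iff) simp

lemma mrank_le_dim_row: "mrank A \<le> dim_row A"
  unfolding mrank_def by (rule vec_space.rank_le_nr[where nc = "dim_col A"]) simp

lemma mrank_le_dim_col: "mrank A \<le> dim_col A"
  unfolding mrank_def by (rule vec_space.rank_le_nc[where nc = "dim_col A"]) simp

lemma inj_mat_imp_dim_col_le:
  fixes A :: "'a::field mat"
  shows "inj_mat A \<Longrightarrow> dim_col A \<le> dim_row A"
  using mrank_le_dim_row[of A] unfolding full_col_rank_iff_inj_mat[symmetric] full_col_rank_def
  by simp

lemma surj_mat_imp_dim_row_le:
  fixes A :: "'a::field mat"
  shows "surj_mat A \<Longrightarrow> dim_row A \<le> dim_col A"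
  using mrank_le_dim_col[of A] unfolding mrank_eq_dim_row_iff_surj_mat[symmetric] by simp

lemma square_inj_mat_iff_surj_mat:
  fixes A :: "'a::field mat"
  shows "dim_row A = dim_col A \<Longrightarrow> inj_mat A \<longleftrightarrow> surj_mat A"
  unfolding full_col_rank_iff_inj_mat[symmetric] mrank_eq_dim_row_iff_surj_mat[symmetric]
    full_col_rank_def
  by simp

lemma inj_mat_if_det_neq_0:
  fixes A :: "'a::field mat"
  assumes "A \<in> carrier_mat n n" and "det A \<noteq> 0"
  shows "inj_mat A"
  using assms det_0_iff_vec_prod_zero_field[OF assms(1)] unfolding inj_mat_def by auto

section \<open>Columns indexed by a set\<close>

text \<open>As in \<open>Gmat\<close>, the columns in a set \<open>A\<close> are ordered increasingly: position \<open>t\<close> of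
  \<open>submat_cols M A\<close> and of \<open>vec_restrict A x\<close> refers to the \<open>t\<close>-th smallest element of \<open>A\<close>, and
  \<open>vec_extend N A\<close> is the inverse zero-padding to length \<open>N\<close>.\<close>

definition submat_cols :: "'a mat \<Rightarrow> nat set \<Rightarrow> 'a mat" where
  "submat_cols M A = mat (dim_row M) (card A) (\<lambda>(i, t). M $$ (i, sorted_list_of_set A ! t))"

definition supported_on :: "'a::zero vec \<Rightarrow> nat set \<Rightarrow> bool" where
  "supported_on x A \<longleftrightarrow> (\<forall>j<dim_vec x. j \<notin> A \<longrightarrow> x $ j = 0)"

definition vec_restrict :: "nat set \<Rightarrow> 'a vec \<Rightarrow> 'a vec" where
  "vec_restrict A x = vec (card A) (\<lambda>t. x $ (sorted_list_of_set A ! t))"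

definition vec_extend :: "nat \<Rightarrow> nat set \<Rightarrow> 'a::zero vec \<Rightarrow> 'a vec" where
  "vec_extend N A y = vec N (\<lambda>j.
     if j \<in> A then y $ inv_into {..<card A} ((!) (sorted_list_of_set A)) j else 0)"

definition cols_indep_on :: "'a::semiring_0 mat \<Rightarrow> nat set \<Rightarrow> bool" where
  "cols_indep_on M A \<longleftrightarrow> (\<forall>x\<in>carrier_vec (dim_col M).
     supported_on x A \<longrightarrow> M *\<^sub>v x = 0\<^sub>v (dim_row M) \<longrightarrow> x = 0\<^sub>v (dim_col M))"

definition cols_span_on :: "'a::semiring_0 mat \<Rightarrow> nat set \<Rightarrow> bool" where
  "cols_span_on M A \<longleftrightarrow>
     (\<forall>b\<in>carrier_vec (dim_row M). \<exists>x\<in>carrier_vec (dim_col M). supported_on x A \<and> M *\<^sub>v x = b)"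

lemma bij_betw_nth_sorted_list_of_set:
  "finite A \<Longrightarrow> bij_betw ((!) (sorted_list_of_set A)) {..<card A} A"
  by (rule bij_betw_nth) auto

lemma nth_sorted_list_of_set_in: "finite A \<Longrightarrow> t < card A \<Longrightarrow> sorted_list_of_set A ! t \<in> A"
  using bij_betw_nth_sorted_list_of_set bij_betwE by blast

lemma obtain_index_sorted_list_of_set:
  assumes "finite A" and "j \<in> A"
  obtains t where "t < card A" and "sorted_list_of_set A ! t = j"
  using bij_betw_nth_sorted_list_of_set[OF assms(1)] assms(2)
  by (metis bij_betw_iff_bijections lessThan_iff)

lemma sum_nth_sorted_list_of_set:
  "finite A \<Longrightarrow> (\<Sum>t<card A. f (sorted_list_of_set A ! t)) = (\<Sum>j\<in>A. f j)"
  by (rule sum.reindex_bij_betw[OF bij_betw_nth_sorted_list_of_set])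

lemma submat_cols_carrier [simp]:
  "dim_row (submat_cols M A) = dim_row M" "dim_col (submat_cols M A) = card A"
  "submat_cols M A \<in> carrier_mat (dim_row M) (card A)"
  unfolding submat_cols_def by auto

lemma index_submat_cols [simp]:
  "i < dim_row M \<Longrightarrow> t < card A \<Longrightarrow> submat_cols M A $$ (i, t) = M $$ (i, sorted_list_of_set A ! t)"
  unfolding submat_cols_def by simp

lemma col_submat_cols:
  "t < card A \<Longrightarrow> col (submat_cols M A) t = col M (sorted_list_of_set A ! t)"
  unfolding submat_cols_def col_def by (intro eq_vecI) auto

lemma submat_cols_lessThan: "submat_cols A {..<dim_col A} = A"
  unfolding submat_cols_def by (intro eq_matI) (auto simp: lessThan_atLeast0)

lemma vec_restrict_carrier [simp]:
  "vec_restrict A x \<in> carrier_vec (card A)" "dim_vec (vec_restrict A x) = card A"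
  unfolding vec_restrict_def by auto

lemma vec_extend_carrier [simp]:
  "vec_extend N A y \<in> carrier_vec N" "dim_vec (vec_extend N A y) = N"
  unfolding vec_extend_def by auto

lemma index_vec_extend_nth:
  assumes "A \<subseteq> {..<N}" and "t < card A"
  shows "vec_extend N A y $ (sorted_list_of_set A ! t) = y $ t"
proof -
  have "finite A"
    using assms(1) finite_subset by blast
  then have "sorted_list_of_set A ! t \<in> A"
    using nth_sorted_list_of_set_in assms(2) by blast
  then show ?thesis
    using assms bij_betw_inv_into_left[OF bij_betw_nth_sorted_list_of_set[OF \<open>finite A\<close>]]
    unfolding vec_extend_def by auto
qed

lemma index_vec_extend_outside: "j \<notin> A \<Longrightarrow> j < N \<Longrightarrow> vec_extend N A y $ j = 0"
  unfolding vec_extend_def by simp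

lemma supported_on_vec_extend: "supported_on (vec_extend N A y) A"
  unfolding supported_on_def vec_extend_def by auto

lemma index_vec_extend_vec_restrict:
  assumes A: "A \<subseteq> {..<N}" and "j < N"
  shows "vec_extend N A (vec_restrict A x) $ j = (if j \<in> A then x $ j else 0)"
proof (cases "j \<in> A")
  case True
  have "finite A"
    using A finite_subset by blast
  then obtain t where t: "t < card A" "sorted_list_of_set A ! t = j"
    using obtain_index_sorted_list_of_set True by blast
  then show ?thesis
    using True index_vec_extend_nth[OF A t(1), of "vec_restrict A x"] unfolding vec_restrict_def
    by simp
qed (use assms index_vec_extend_outside in simp)

lemma vec_extend_vec_restrict:
  assumes "A \<subseteq> {..<N}" and "x \<in> carrier_vec N" and "supported_on x A"
  shows "vec_extend N A (vec_restrict A x) = x"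
proof (rule eq_vecI)
  fix j assume "j < dim_vec x"
  then show "vec_extend N A (vec_restrict A x) $ j = x $ j"
    using assms index_vec_extend_vec_restrict[OF assms(1), of j x] unfolding supported_on_def
    by auto
qed (use assms in simp)

lemma vec_extend_eq_0_iff:
  assumes A: "A \<subseteq> {..<N}" and y: "y \<in> carrier_vec (card A)"
  shows "vec_extend N A y = 0\<^sub>v N \<longleftrightarrow> y = 0\<^sub>v (card A)"
proof
  assume y0: "vec_extend N A y = 0\<^sub>v N"
  show "y = 0\<^sub>v (card A)"
  proof (rule eq_vecI)
    fix t assume "t < dim_vec (0\<^sub>v (card A) :: 'a vec)"
    then have "t < card A" by simp
    moreover have "finite A"
      using A finite_subset by blast
    ultimately have "sorted_list_of_set A ! t < N"
      using nth_sorted_list_of_set_in A by blast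
    then show "y $ t = 0\<^sub>v (card A) $ t"
      using index_vec_extend_nth[OF A \<open>t < card A\<close>, of y] y0 \<open>t < card A\<close> by simp
  qed (use y in simp)
next
  assume "y = 0\<^sub>v (card A)"
  moreover have "finite A"
    using A finite_subset by blast
  ultimately show "vec_extend N A y = 0\<^sub>v N"
    using bij_betwE[OF bij_betw_inv_into[OF bij_betw_nth_sorted_list_of_set[OF \<open>finite A\<close>]]]
    unfolding vec_extend_def by (intro eq_vecI) auto
qed

lemma supported_on_vec_extend_diff:
  fixes y1 y2 :: "'a::group_add vec"
  shows "supported_on (vec_extend N A1 y1 - vec_extend N A2 y2) (A1 \<union> A2)"
  unfolding supported_on_def by (auto simp: index_vec_extend_outside)

lemma obtain_vec_extend_diff:
  fixes z :: "'a::ab_group_add vec"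
  assumes A1: "A1 \<subseteq> {..<N}" and A2: "A2 \<subseteq> {..<N}"
    and z: "z \<in> carrier_vec N" and "supported_on z (A1 \<union> A2)"
  obtains y1 y2 where "y1 \<in> carrier_vec (card A1)" "y2 \<in> carrier_vec (card A2)"
    and "z = vec_extend N A1 y1 - vec_extend N A2 y2"
proof -
  define w where "w = vec_extend N A1 (vec_restrict A1 z) - z"
  have "w $ j = 0" if "j < N" "j \<notin> A2" for j
    using assms that index_vec_extend_vec_restrict[OF A1 \<open>j < N\<close>, of z] unfolding w_def supported_on_def
    by auto
  then have "supported_on w A2"
    using z unfolding supported_on_def w_def by simp
  moreover have "w \<in> carrier_vec N"
    using z unfolding w_def by simp
  ultimately have "vec_extend N A2 (vec_restrict A2 w) = w"
    using vec_extend_vec_restrict[OF A2] by blast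
  then have "z = vec_extend N A1 (vec_restrict A1 z) - vec_extend N A2 (vec_restrict A2 w)"
    using z unfolding w_def by (auto simp: vec_eq_iff)
  then show thesis
    by (rule that[OF vec_restrict_carrier(1) vec_restrict_carrier(1)])
qed

lemma vec_extend_eq_vec_extend_disjoint:
  assumes A1: "A1 \<subseteq> {..<N}" and A2: "A2 \<subseteq> {..<N}" and "A1 \<inter> A2 = {}"
    and y1: "y1 \<in> carrier_vec (card A1)" and y2: "y2 \<in> carrier_vec (card A2)"
    and eq: "vec_extend N A1 y1 = vec_extend N A2 y2"
  shows "y1 = 0\<^sub>v (card A1) \<and> y2 = 0\<^sub>v (card A2)"
proof -
  have "vec_extend N A1 y1 $ j = 0" if "j < N" for j
    using that eq \<open>A1 \<inter> A2 = {}\<close> index_vec_extend_outside[of j A1 N y1]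
      index_vec_extend_outside[of j A2 N y2]
    by (cases "j \<in> A1") auto
  then have "vec_extend N A1 y1 = 0\<^sub>v N" "vec_extend N A2 y2 = 0\<^sub>v N"
    using eq by auto
  then show ?thesis
    using vec_extend_eq_0_iff[OF A1 y1] vec_extend_eq_0_iff[OF A2 y2] by simp
qed

lemma mult_vec_extend:
  fixes M :: "'a::semiring_0 mat"
  assumes M: "M \<in> carrier_mat k N" and A: "A \<subseteq> {..<N}" and y: "y \<in> carrier_vec (card A)"
  shows "M *\<^sub>v vec_extend N A y = submat_cols M A *\<^sub>v y"
proof (rule eq_vecI)
  fix i assume "i < dim_vec (submat_cols M A *\<^sub>v y)"
  then have i: "i < k"
    using M by simp
  have "finite A"
    using A finite_subset by blast
  have "(M *\<^sub>v vec_extend N A y) $ i = (\<Sum>j<N. M $$ (i, j) * vec_extend N A y $ j)"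
    by (rule index_mult_mat_vec_sum[OF M i]) simp
  also have "\<dots> = (\<Sum>j\<in>A. M $$ (i, j) * vec_extend N A y $ j)"
    using A by (intro sum.mono_neutral_right) (auto simp: index_vec_extend_outside)
  also have "\<dots> = (\<Sum>t<card A.
      M $$ (i, sorted_list_of_set A ! t) * vec_extend N A y $ (sorted_list_of_set A ! t))"
    by (rule sum_nth_sorted_list_of_set[OF \<open>finite A\<close>, symmetric])
  also have "\<dots> = (\<Sum>t<card A. M $$ (i, sorted_list_of_set A ! t) * y $ t)"
    by (rule sum.cong) (simp_all add: index_vec_extend_nth[OF A])
  also have "\<dots> = (\<Sum>t<card A. submat_cols M A $$ (i, t) * y $ t)"
    using M i by (intro sum.cong) auto
  also have "\<dots> = (submat_cols M A *\<^sub>v y) $ i"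
    by (rule index_mult_mat_vec_sum[symmetric]) (use M i y in auto)
  finally show "(M *\<^sub>v vec_extend N A y) $ i = (submat_cols M A *\<^sub>v y) $ i" .
qed (use M in simp)

lemma mult_supported_on:
  fixes M :: "'a::semiring_0 mat"
  assumes M: "M \<in> carrier_mat k N" and A: "A \<subseteq> {..<N}"
    and x: "x \<in> carrier_vec N" and "supported_on x A"
  shows "M *\<^sub>v x = submat_cols M A *\<^sub>v vec_restrict A x"
proof -
  have "M *\<^sub>v x = M *\<^sub>v vec_extend N A (vec_restrict A x)"
    using vec_extend_vec_restrict[OF A x assms(4)] by simp
  also have "\<dots> = submat_cols M A *\<^sub>v vec_restrict A x"
    by (rule mult_vec_extend[OF M A]) simp
  finally show ?thesis .
qed

lemma mult_vec_extend_diff: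
  fixes M :: "'a::ring mat"
  assumes M: "M \<in> carrier_mat k N" and A1: "A1 \<subseteq> {..<N}" and A2: "A2 \<subseteq> {..<N}"
    and "y1 \<in> carrier_vec (card A1)" and "y2 \<in> carrier_vec (card A2)"
  shows "M *\<^sub>v (vec_extend N A1 y1 - vec_extend N A2 y2)
    = submat_cols M A1 *\<^sub>v y1 - submat_cols M A2 *\<^sub>v y2"
  using assms by (simp add: mult_minus_distrib_mat_vec mult_vec_extend)

lemma cols_indep_on_iff_inj_mat:
  fixes M :: "'a::semiring_0 mat"
  assumes M: "M \<in> carrier_mat k N" and A: "A \<subseteq> {..<N}"
  shows "cols_indep_on M A \<longleftrightarrow> inj_mat (submat_cols M A)"
proof
  assume indep: "cols_indep_on M A"
  show "inj_mat (submat_cols M A)"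
    unfolding inj_mat_def
  proof (intro ballI impI)
    fix y assume y: "y \<in> carrier_vec (dim_col (submat_cols M A))"
      and "submat_cols M A *\<^sub>v y = 0\<^sub>v (dim_row (submat_cols M A))"
    then have "M *\<^sub>v vec_extend N A y = 0\<^sub>v k"
      using mult_vec_extend[OF M A] M by simp
    then have "vec_extend N A y = 0\<^sub>v N"
      using indep M supported_on_vec_extend unfolding cols_indep_on_def by fastforce
    then show "y = 0\<^sub>v (dim_col (submat_cols M A))"
      using vec_extend_eq_0_iff[OF A, of y] y by simp
  qed
next
  assume inj: "inj_mat (submat_cols M A)"
  show "cols_indep_on M A"
    unfolding cols_indep_on_def
  proof (intro ballI impI)
    fix x assume x: "x \<in> carrier_vec (dim_col M)" and "supported_on x A"
      and "M *\<^sub>v x = 0\<^sub>v (dim_row M)"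
    then have "submat_cols M A *\<^sub>v vec_restrict A x = 0\<^sub>v k"
      using mult_supported_on[OF M A] M by simp
    then have "vec_restrict A x = 0\<^sub>v (card A)"
      using inj M unfolding inj_mat_def by simp
    then show "x = 0\<^sub>v (dim_col M)"
      using vec_extend_vec_restrict[OF A] vec_extend_eq_0_iff[OF A] x M \<open>supported_on x A\<close>
      by (metis carrier_matD(2) vec_restrict_carrier(1))
  qed
qed

lemma cols_span_on_iff_surj_mat:
  fixes M :: "'a::semiring_0 mat"
  assumes M: "M \<in> carrier_mat k N" and A: "A \<subseteq> {..<N}"
  shows "cols_span_on M A \<longleftrightarrow> surj_mat (submat_cols M A)"
proof
  assume span: "cols_span_on M A"
  show "surj_mat (submat_cols M A)"
    unfolding surj_mat_def
  proof
    fix b :: "'a vec" assume "b \<in> carrier_vec (dim_row (submat_cols M A))"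
    then obtain x where "x \<in> carrier_vec N" "supported_on x A" "M *\<^sub>v x = b"
      using span M unfolding cols_span_on_def by auto
    then show "\<exists>v\<in>carrier_vec (dim_col (submat_cols M A)). submat_cols M A *\<^sub>v v = b"
      using mult_supported_on[OF M A] by (intro bexI[of _ "vec_restrict A x"]) auto
  qed
next
  assume surj: "surj_mat (submat_cols M A)"
  show "cols_span_on M A"
    unfolding cols_span_on_def
  proof
    fix b :: "'a vec" assume "b \<in> carrier_vec (dim_row M)"
    then obtain y where "y \<in> carrier_vec (card A)" "submat_cols M A *\<^sub>v y = b"
      using surj unfolding surj_mat_def by auto
    then have "M *\<^sub>v vec_extend N A y = b"
      using mult_vec_extend[OF M A] by simp
    then show "\<exists>x\<in>carrier_vec (dim_col M). supported_on x A \<and> M *\<^sub>v x = b"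
      using supported_on_vec_extend M by (intro bexI[of _ "vec_extend N A y"]) auto
  qed
qed

lemma card_le_if_cols_indep_on:
  fixes M :: "'a::field mat"
  assumes "M \<in> carrier_mat k N" and "A \<subseteq> {..<N}" and "cols_indep_on M A"
  shows "card A \<le> k"
  using inj_mat_imp_dim_col_le[of "submat_cols M A"] cols_indep_on_iff_inj_mat[OF assms(1,2)] assms
  by simp

lemma card_ge_if_cols_span_on:
  fixes M :: "'a::field mat"
  assumes "M \<in> carrier_mat k N" and "A \<subseteq> {..<N}" and "cols_span_on M A"
  shows "k \<le> card A"
  using surj_mat_imp_dim_row_le[of "submat_cols M A"] cols_span_on_iff_surj_mat[OF assms(1,2)] assms
  by simp

lemma cols_indep_on_subset: "cols_indep_on M A \<Longrightarrow> B \<subseteq> A \<Longrightarrow> cols_indep_on M B"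
  unfolding cols_indep_on_def supported_on_def by blast

lemma cols_span_on_mono: "cols_span_on M A \<Longrightarrow> A \<subseteq> B \<Longrightarrow> cols_span_on M B"
  unfolding cols_span_on_def supported_on_def by blast

section \<open>The block matrix of two sets\<close>

lemma blk_off_two [simp]:
  "blk_off k [A1, A2] 0 = k" "blk_off k [A1, A2] (Suc 0) = k + card A1"
  "blk_off k [A1, A2] (Suc (Suc 0)) = k + card A1 + card A2"
  unfolding blk_off_def by (auto simp: numeral_2_eq_2)

lemma Gmat_two_carrier:
  "Gmat M [A1, A2] \<in> carrier_mat (2 * dim_row M) (dim_row M + card A1 + card A2)"
  unfolding Gmat_def Let_def by (simp add: numeral_2_eq_2)

lemma row_Gmat_upper:
  assumes M: "M \<in> carrier_mat k N" and "i < k"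
  shows "row (Gmat M [A1, A2]) i = unit_vec k i @\<^sub>v row (submat_cols M A1) i @\<^sub>v 0\<^sub>v (card A2)"
proof -
  have "i div k = 0" "i mod k = i"
    using \<open>i < k\<close> by auto
  then show ?thesis
    using assms Gmat_two_carrier[of M A1 A2] unfolding Gmat_def Let_def
    by (intro eq_vecI) (auto simp: numeral_2_eq_2)
qed

lemma row_Gmat_lower:
  assumes M: "M \<in> carrier_mat k N" and "i < k"
  shows "row (Gmat M [A1, A2]) (k + i) = unit_vec k i @\<^sub>v 0\<^sub>v (card A1) @\<^sub>v row (submat_cols M A2) i"
proof -
  have "(k + i) div k = Suc 0" "(k + i) mod k = i"
    using \<open>i < k\<close> by auto
  then show ?thesis
    using assms Gmat_two_carrier[of M A1 A2] unfolding Gmat_def Let_def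
    by (intro eq_vecI) (auto simp: numeral_2_eq_2)
qed

lemma Gmat_mult_append:
  fixes M :: "'a::semiring_1 mat"
  assumes M: "M \<in> carrier_mat k N" and u: "u \<in> carrier_vec k"
    and y1: "y1 \<in> carrier_vec (card A1)" and y2: "y2 \<in> carrier_vec (card A2)"
  shows "Gmat M [A1, A2] *\<^sub>v (u @\<^sub>v y1 @\<^sub>v y2)
    = (u + submat_cols M A1 *\<^sub>v y1) @\<^sub>v (u + submat_cols M A2 *\<^sub>v y2)"
proof -
  let ?G = "Gmat M [A1, A2]" and ?p = "card A1" and ?q = "card A2"
  have G: "?G \<in> carrier_mat (2 * k) (k + ?p + ?q)"
    using Gmat_two_carrier[of M A1 A2] M by simp
  have prod: "(a @\<^sub>v b @\<^sub>v c) \<bullet> (u @\<^sub>v y1 @\<^sub>v y2) = a \<bullet> u + b \<bullet> y1 + c \<bullet> y2"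
    if "a \<in> carrier_vec k" "b \<in> carrier_vec ?p" "c \<in> carrier_vec ?q" for a b c
    using scalar_prod_append[OF that(1) append_carrier_vec[OF that(2,3)] u append_carrier_vec[OF y1 y2]]
      scalar_prod_append[OF that(2,3) y1 y2]
    by (simp add: add.assoc)
  show ?thesis
  proof (rule eq_vecI)
    fix r assume "r < dim_vec ((u + submat_cols M A1 *\<^sub>v y1) @\<^sub>v (u + submat_cols M A2 *\<^sub>v y2))"
    then have "r < 2 * k"
      using u M by simp
    show "(?G *\<^sub>v (u @\<^sub>v y1 @\<^sub>v y2)) $ r
      = ((u + submat_cols M A1 *\<^sub>v y1) @\<^sub>v (u + submat_cols M A2 *\<^sub>v y2)) $ r"
    proof (cases "r < k")
      case True
      then show ?thesis
        using G M u y1 y2 row_Gmat_upper[OF M True] row_carrier[of "submat_cols M A1" r]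
          prod[of "unit_vec k r" "row (submat_cols M A1) r" "0\<^sub>v ?q"] by simp
    next
      case False
      then obtain i where "i < k" "r = k + i"
        using \<open>r < 2 * k\<close> by (metis add_diff_inverse_nat mult_2 nat_add_left_cancel_less)
      then show ?thesis
        using G M u y1 y2 row_Gmat_lower[OF M \<open>i < k\<close>] row_carrier[of "submat_cols M A2" i]
          prod[of "unit_vec k i" "0\<^sub>v ?p" "row (submat_cols M A2) i"] by simp
    qed
  qed (use G u M in simp)
qed

lemma Gmat_mult_append_eq_0_iff:
  fixes M :: "'a::semiring_1 mat"
  assumes M: "M \<in> carrier_mat k N" and "u \<in> carrier_vec k"
    and "y1 \<in> carrier_vec (card A1)" and "y2 \<in> carrier_vec (card A2)"
  shows "Gmat M [A1, A2] *\<^sub>v (u @\<^sub>v y1 @\<^sub>v y2) = 0\<^sub>v (k + k) \<longleftrightarrow>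
    u + submat_cols M A1 *\<^sub>v y1 = 0\<^sub>v k \<and> u + submat_cols M A2 *\<^sub>v y2 = 0\<^sub>v k"
proof -
  have "submat_cols M A1 \<in> carrier_mat k (card A1)"
    using M by auto
  have "Gmat M [A1, A2] *\<^sub>v (u @\<^sub>v y1 @\<^sub>v y2) = 0\<^sub>v (k + k) \<longleftrightarrow>
      (u + submat_cols M A1 *\<^sub>v y1) @\<^sub>v (u + submat_cols M A2 *\<^sub>v y2) = 0\<^sub>v k @\<^sub>v 0\<^sub>v k"
    by (simp only: Gmat_mult_append[OF assms] zero_vec_add_eq_append)
  also have "\<dots> \<longleftrightarrow> u + submat_cols M A1 *\<^sub>v y1 = 0\<^sub>v k \<and> u + submat_cols M A2 *\<^sub>v y2 = 0\<^sub>v k"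
    by (rule append_vec_eq[of _ k]) (use assms \<open>submat_cols M A1 \<in> carrier_mat k (card A1)\<close> in simp_all)
  finally show ?thesis .
qed

lemma inj_mat_Gmat_iff:
  fixes M :: "'a::comm_ring_1 mat"
  assumes M: "M \<in> carrier_mat k N"
  shows "inj_mat (Gmat M [A1, A2]) \<longleftrightarrow>
    (\<forall>y1\<in>carrier_vec (card A1). \<forall>y2\<in>carrier_vec (card A2).
      submat_cols M A1 *\<^sub>v y1 = submat_cols M A2 *\<^sub>v y2 \<longrightarrow>
      y1 = 0\<^sub>v (card A1) \<and> y2 = 0\<^sub>v (card A2))"
    (is "_ \<longleftrightarrow> ?P")
proof -
  let ?G = "Gmat M [A1, A2]" and ?X1 = "submat_cols M A1" and ?X2 = "submat_cols M A2"
  have G: "?G \<in> carrier_mat (k + k) (k + card A1 + card A2)"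
    using Gmat_two_carrier[of M A1 A2] M by (simp add: mult_2)
  have X: "?X1 \<in> carrier_mat k (card A1)" "?X2 \<in> carrier_mat k (card A2)"
    using M by auto
  show ?thesis
  proof
    assume inj: "inj_mat ?G"
    show ?P
    proof (intro ballI impI)
      fix y1 y2 assume y: "y1 \<in> carrier_vec (card A1)" "y2 \<in> carrier_vec (card A2)"
        and eq: "?X1 *\<^sub>v y1 = ?X2 *\<^sub>v y2"
      have "- (?X1 *\<^sub>v y1) + ?X1 *\<^sub>v y1 = 0\<^sub>v k" "- (?X1 *\<^sub>v y1) + ?X2 *\<^sub>v y2 = 0\<^sub>v k"
        using y X unfolding eq by auto
      then have "?G *\<^sub>v (- (?X1 *\<^sub>v y1) @\<^sub>v y1 @\<^sub>v y2) = 0\<^sub>v (k + k)"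
        using Gmat_mult_append_eq_0_iff[OF M _ y] X y by simp
      then have "- (?X1 *\<^sub>v y1) @\<^sub>v y1 @\<^sub>v y2 = 0\<^sub>v (k + card A1 + card A2)"
        using inj G y X unfolding inj_mat_def by (auto simp: add.assoc)
      then show "y1 = 0\<^sub>v (card A1) \<and> y2 = 0\<^sub>v (card A2)"
        using append_vec3_eq_0_iff[of "- (?X1 *\<^sub>v y1)" k] y X by simp
    qed
  next
    assume P: ?P
    show "inj_mat ?G"
      unfolding inj_mat_def
    proof (intro ballI impI)
      fix x assume "x \<in> carrier_vec (dim_col ?G)" and Gx: "?G *\<^sub>v x = 0\<^sub>v (dim_row ?G)"
      then obtain u y1 y2 where uy: "u \<in> carrier_vec k" "y1 \<in> carrier_vec (card A1)"
          "y2 \<in> carrier_vec (card A2)" and x: "x = u @\<^sub>v y1 @\<^sub>v y2"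
        using G obtain_append_vec3 by (metis carrier_matD(2))
      then have "u + ?X1 *\<^sub>v y1 = 0\<^sub>v k" "u + ?X2 *\<^sub>v y2 = 0\<^sub>v k"
        using Gmat_mult_append_eq_0_iff[OF M uy] Gx G by auto
      then have "?X1 *\<^sub>v y1 = ?X2 *\<^sub>v y2"
        using uy X by (auto simp: vec_eq_iff) (metis add_left_cancel)
      then have "y1 = 0\<^sub>v (card A1)" "y2 = 0\<^sub>v (card A2)"
        using P uy by auto
      moreover from this have "u = 0\<^sub>v k"
        using \<open>u + ?X1 *\<^sub>v y1 = 0\<^sub>v k\<close> uy mult_mat_vec_zero[OF X(1)] by simp
      ultimately show "x = 0\<^sub>v (dim_col ?G)"
        using x G append_vec3_eq_0_iff uy by auto
    qed
  qed
qed

lemma surj_mat_Gmat_iff: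
  fixes M :: "'a::comm_ring_1 mat"
  assumes M: "M \<in> carrier_mat k N"
  shows "surj_mat (Gmat M [A1, A2]) \<longleftrightarrow>
    (\<forall>b\<in>carrier_vec k. \<exists>y1\<in>carrier_vec (card A1). \<exists>y2\<in>carrier_vec (card A2).
      submat_cols M A1 *\<^sub>v y1 - submat_cols M A2 *\<^sub>v y2 = b)"
    (is "_ \<longleftrightarrow> ?P")
proof -
  let ?G = "Gmat M [A1, A2]" and ?X1 = "submat_cols M A1" and ?X2 = "submat_cols M A2"
  have G: "?G \<in> carrier_mat (k + k) (k + card A1 + card A2)"
    using Gmat_two_carrier[of M A1 A2] M by (simp add: mult_2)
  have X: "?X1 \<in> carrier_mat k (card A1)" "?X2 \<in> carrier_mat k (card A2)"
    using M by auto
  show ?thesis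
  proof
    assume surj: "surj_mat ?G"
    show ?P
    proof
      fix b :: "'a vec" assume b: "b \<in> carrier_vec k"
      then have "b @\<^sub>v 0\<^sub>v k \<in> carrier_vec (dim_row ?G)"
        using G by simp
      then obtain x where "x \<in> carrier_vec (dim_col ?G)" "?G *\<^sub>v x = b @\<^sub>v 0\<^sub>v k"
        using surj unfolding surj_mat_def by blast
      moreover obtain u y1 y2 where uy: "u \<in> carrier_vec k" "y1 \<in> carrier_vec (card A1)"
          "y2 \<in> carrier_vec (card A2)" and x: "x = u @\<^sub>v y1 @\<^sub>v y2"
        using G obtain_append_vec3 calculation(1) by (metis carrier_matD(2))
      ultimately have "u + ?X1 *\<^sub>v y1 = b" "u + ?X2 *\<^sub>v y2 = 0\<^sub>v k"
        using Gmat_mult_append[OF M uy] append_vec_eq[of "u + ?X1 *\<^sub>v y1" k b] uy X b by auto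
      moreover have "?X1 *\<^sub>v y1 - ?X2 *\<^sub>v y2 = (u + ?X1 *\<^sub>v y1) - (u + ?X2 *\<^sub>v y2)"
        using uy X by (intro eq_vecI) auto
      ultimately have "?X1 *\<^sub>v y1 - ?X2 *\<^sub>v y2 = b"
        using b by simp
      then show "\<exists>y1\<in>carrier_vec (card A1). \<exists>y2\<in>carrier_vec (card A2). ?X1 *\<^sub>v y1 - ?X2 *\<^sub>v y2 = b"
        using uy by blast
    qed
  next
    assume P: ?P
    show "surj_mat ?G"
      unfolding surj_mat_def
    proof
      fix c :: "'a vec" assume "c \<in> carrier_vec (dim_row ?G)"
      then have c: "c = vec_first c k @\<^sub>v vec_last c k"
        using G by simp
      obtain y1 y2 where y: "y1 \<in> carrier_vec (card A1)" "y2 \<in> carrier_vec (card A2)"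
        and eq: "?X1 *\<^sub>v y1 - ?X2 *\<^sub>v y2 = vec_first c k - vec_last c k"
        using P by (meson minus_carrier_vec vec_first_carrier vec_last_carrier)
      define u where "u = vec_last c k - ?X2 *\<^sub>v y2"
      have u: "u \<in> carrier_vec k"
        using X y unfolding u_def by simp
      have lower: "u + ?X2 *\<^sub>v y2 = vec_last c k"
        using X y unfolding u_def by (intro eq_vecI) auto
      have "u + ?X1 *\<^sub>v y1 = (u + ?X2 *\<^sub>v y2) + (?X1 *\<^sub>v y1 - ?X2 *\<^sub>v y2)"
        using X y u by (intro eq_vecI) auto
      then have "u + ?X1 *\<^sub>v y1 = vec_first c k"
        unfolding lower eq by (intro eq_vecI) auto
      with lower have "?G *\<^sub>v (u @\<^sub>v y1 @\<^sub>v y2) = c"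
        using Gmat_mult_append[OF M u y] c by simp
      then show "\<exists>v\<in>carrier_vec (dim_col ?G). ?G *\<^sub>v v = c"
        using G u y by (intro bexI[of _ "u @\<^sub>v y1 @\<^sub>v y2"]) (auto simp: add.assoc)
    qed
  qed
qed

lemma disjoint_if_inj_mat_Gmat:
  fixes M :: "'a::comm_ring_1 mat"
  assumes M: "M \<in> carrier_mat k N" and A1: "A1 \<subseteq> {..<N}" and A2: "A2 \<subseteq> {..<N}"
    and inj: "inj_mat (Gmat M [A1, A2])"
  shows "A1 \<inter> A2 = {}"
proof (rule ccontr)
  let ?X1 = "submat_cols M A1" and ?X2 = "submat_cols M A2"
  have X: "?X1 \<in> carrier_mat k (card A1)" "?X2 \<in> carrier_mat k (card A2)"
    using M by auto
  assume "A1 \<inter> A2 \<noteq> {}"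
  then obtain j where "j \<in> A1" "j \<in> A2"
    by blast
  moreover have "finite A1" "finite A2"
    using A1 A2 finite_subset by blast+
  ultimately obtain t1 t2 where t1: "t1 < card A1" "sorted_list_of_set A1 ! t1 = j"
    and t2: "t2 < card A2" "sorted_list_of_set A2 ! t2 = j"
    using obtain_index_sorted_list_of_set by metis
  then have "?X1 *\<^sub>v unit_vec (card A1) t1 = ?X2 *\<^sub>v unit_vec (card A2) t2"
    using mult_unit_vec_eq_col[OF X(1) t1(1)] mult_unit_vec_eq_col[OF X(2) t2(1)]
      col_submat_cols[OF t1(1), of M] col_submat_cols[OF t2(1), of M] by simp
  then have "(unit_vec (card A1) t1 :: 'a vec) = 0\<^sub>v (card A1)"
    using inj unit_vec_carrier unfolding inj_mat_Gmat_iff[OF M] by blast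
  then show False
    using t1(1) by (metis index_unit_vec(1) index_zero_vec(1) zero_neq_one)
qed

lemma cols_indep_on_if_inj_mat_Gmat:
  fixes M :: "'a::comm_ring_1 mat"
  assumes M: "M \<in> carrier_mat k N" and A1: "A1 \<subseteq> {..<N}" and A2: "A2 \<subseteq> {..<N}"
    and inj: "inj_mat (Gmat M [A1, A2])"
  shows "cols_indep_on M (A1 \<union> A2)"
  unfolding cols_indep_on_def
proof (intro ballI impI)
  fix z assume z: "z \<in> carrier_vec (dim_col M)" "supported_on z (A1 \<union> A2)"
    and Mz: "M *\<^sub>v z = 0\<^sub>v (dim_row M)"
  have X: "submat_cols M A1 \<in> carrier_mat k (card A1)" "submat_cols M A2 \<in> carrier_mat k (card A2)"
    using M by auto
  obtain y1 y2 where y: "y1 \<in> carrier_vec (card A1)" "y2 \<in> carrier_vec (card A2)"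
    and z_eq: "z = vec_extend N A1 y1 - vec_extend N A2 y2"
    using obtain_vec_extend_diff[OF A1 A2 _ z(2)] z(1) M by auto
  then have "submat_cols M A1 *\<^sub>v y1 - submat_cols M A2 *\<^sub>v y2 = 0\<^sub>v k"
    using Mz M mult_vec_extend_diff[OF M A1 A2 y] by simp
  then have "submat_cols M A1 *\<^sub>v y1 = submat_cols M A2 *\<^sub>v y2"
    using minus_eq_0_vec_iff[OF mult_mat_vec_carrier[OF X(1) y(1)] mult_mat_vec_carrier[OF X(2) y(2)]]
    by simp
  then have "y1 = 0\<^sub>v (card A1)" "y2 = 0\<^sub>v (card A2)"
    using inj y unfolding inj_mat_Gmat_iff[OF M] by auto
  then show "z = 0\<^sub>v (dim_col M)"
    using z_eq M vec_extend_eq_0_iff[OF A1 y(1)] vec_extend_eq_0_iff[OF A2 y(2)] by simp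
qed

lemma inj_mat_Gmat_if_cols_indep_on:
  fixes M :: "'a::comm_ring_1 mat"
  assumes M: "M \<in> carrier_mat k N" and A1: "A1 \<subseteq> {..<N}" and A2: "A2 \<subseteq> {..<N}"
    and "A1 \<inter> A2 = {}" and indep: "cols_indep_on M (A1 \<union> A2)"
  shows "inj_mat (Gmat M [A1, A2])"
  unfolding inj_mat_Gmat_iff[OF M]
proof (intro ballI impI)
  fix y1 y2 assume y: "y1 \<in> carrier_vec (card A1)" "y2 \<in> carrier_vec (card A2)"
    and "submat_cols M A1 *\<^sub>v y1 = submat_cols M A2 *\<^sub>v y2"
  moreover have "submat_cols M A2 \<in> carrier_mat k (card A2)"
    using M by auto
  ultimately have "M *\<^sub>v (vec_extend N A1 y1 - vec_extend N A2 y2) = 0\<^sub>v k"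
    using mult_vec_extend_diff[OF M A1 A2 y] by simp
  moreover have "vec_extend N A1 y1 - vec_extend N A2 y2 \<in> carrier_vec N"
    by simp
  ultimately have "vec_extend N A1 y1 - vec_extend N A2 y2 = 0\<^sub>v N"
    using indep M supported_on_vec_extend_diff[of N A1 y1 A2 y2]
    unfolding cols_indep_on_def by auto
  then have "vec_extend N A1 y1 = vec_extend N A2 y2"
    using minus_eq_0_vec_iff[OF vec_extend_carrier(1) vec_extend_carrier(1)] by blast
  then show "y1 = 0\<^sub>v (card A1) \<and> y2 = 0\<^sub>v (card A2)"
    by (rule vec_extend_eq_vec_extend_disjoint[OF A1 A2 \<open>A1 \<inter> A2 = {}\<close> y])
qed

lemma full_col_rank_Gmat_iff:
  fixes M :: "'a::field mat"
  assumes "M \<in> carrier_mat k N" and "A1 \<subseteq> {..<N}" and "A2 \<subseteq> {..<N}"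
  shows "full_col_rank (Gmat M [A1, A2]) \<longleftrightarrow> A1 \<inter> A2 = {} \<and> cols_indep_on M (A1 \<union> A2)"
  unfolding full_col_rank_iff_inj_mat
  using disjoint_if_inj_mat_Gmat[OF assms] cols_indep_on_if_inj_mat_Gmat[OF assms]
    inj_mat_Gmat_if_cols_indep_on[OF assms] by blast

lemma saturated_Gmat_iff:
  fixes M :: "'a::field mat"
  assumes M: "M \<in> carrier_mat k N" and A1: "A1 \<subseteq> {..<N}" and A2: "A2 \<subseteq> {..<N}"
  shows "saturated M [A1, A2] \<longleftrightarrow> cols_span_on M (A1 \<union> A2)"
proof -
  have "saturated M [A1, A2] \<longleftrightarrow> surj_mat (Gmat M [A1, A2])"
    unfolding saturated_def mrank_eq_dim_row_iff_surj_mat[symmetric]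
    using Gmat_two_carrier[of M A1 A2] by (simp add: mult_2)
  also have "\<dots> \<longleftrightarrow> cols_span_on M (A1 \<union> A2)"
    unfolding surj_mat_Gmat_iff[OF M] cols_span_on_def
  proof (intro iffI ballI)
    fix b :: "'a vec" assume b: "b \<in> carrier_vec (dim_row M)"
    assume "\<forall>b\<in>carrier_vec k. \<exists>y1\<in>carrier_vec (card A1). \<exists>y2\<in>carrier_vec (card A2).
      submat_cols M A1 *\<^sub>v y1 - submat_cols M A2 *\<^sub>v y2 = b"
    then obtain y1 y2 where y: "y1 \<in> carrier_vec (card A1)" "y2 \<in> carrier_vec (card A2)"
      and "submat_cols M A1 *\<^sub>v y1 - submat_cols M A2 *\<^sub>v y2 = b"
      using b M by auto
    then show "\<exists>x\<in>carrier_vec (dim_col M). supported_on x (A1 \<union> A2) \<and> M *\<^sub>v x = b"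
      using mult_vec_extend_diff[OF M A1 A2 y] supported_on_vec_extend_diff M
      by (intro bexI[of _ "vec_extend N A1 y1 - vec_extend N A2 y2"]) auto
  next
    fix b :: "'a vec" assume b: "b \<in> carrier_vec k"
    assume "\<forall>b\<in>carrier_vec (dim_row M). \<exists>x\<in>carrier_vec (dim_col M).
      supported_on x (A1 \<union> A2) \<and> M *\<^sub>v x = b"
    then obtain z where z: "z \<in> carrier_vec N" "supported_on z (A1 \<union> A2)" "M *\<^sub>v z = b"
      using b M by auto
    then obtain y1 y2 where y: "y1 \<in> carrier_vec (card A1)" "y2 \<in> carrier_vec (card A2)"
      and "z = vec_extend N A1 y1 - vec_extend N A2 y2"
      using obtain_vec_extend_diff[OF A1 A2] by blast
    then show "\<exists>y1\<in>carrier_vec (card A1). \<exists>y2\<in>carrier_vec (card A2).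
      submat_cols M A1 *\<^sub>v y1 - submat_cols M A2 *\<^sub>v y2 = b"
      using mult_vec_extend_diff[OF M A1 A2 y] z by auto
  qed
  finally show ?thesis .
qed

section \<open>Generic matrices\<close>

type_synonym 'a rat_fun = "((nat \<Rightarrow>\<^sub>0 nat) \<Rightarrow>\<^sub>0 'a) fract"

definition indet :: "nat \<Rightarrow> 'a::field rat_fun" where
  "indet v = Fract (Poly_Mapping.single (Poly_Mapping.single v 1) 1) 1"

lemma generic_mat_carrier [simp]:
  "generic_mat m n \<in> carrier_mat m n" "dim_row (generic_mat m n) = m" "dim_col (generic_mat m n) = n"
  unfolding generic_mat_def by auto

lemma index_generic_mat [simp]:
  "i < m \<Longrightarrow> j < n \<Longrightarrow> generic_mat m n $$ (i, j) = indet (i * n + j)"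
  unfolding generic_mat_def indet_def by simp

lemma prod_single_one:
  "finite I \<Longrightarrow> (\<Prod>i\<in>I. Poly_Mapping.single (g i) (1::'b::comm_semiring_1))
    = (Poly_Mapping.single (\<Sum>i\<in>I. g i) 1 :: 'k::comm_monoid_add \<Rightarrow>\<^sub>0 'b)"
  by (induction I rule: finite_induct) (auto simp: mult_single)

lemma comm_ring_hom_Fract_one: "comm_ring_hom (\<lambda>a::'a::idom. Fract a 1)"
  by unfold_locales (simp_all add: One_fract_def Zero_fract_def)

lemma permutes_eq_id_if_sum_single_eq:
  fixes f :: "nat \<Rightarrow> nat \<Rightarrow> nat"
  assumes inj: "inj_on (\<lambda>(i, t). f i t) ({..<r} \<times> {..<r})" and p: "p permutes {0..<r}"
    and eq: "(\<Sum>i\<in>{0..<r}. Poly_Mapping.single (f i (p i)) (1::nat))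
      = (\<Sum>i\<in>{0..<r}. Poly_Mapping.single (f i i) 1)"
  shows "p = id"
proof
  have lookup: "Poly_Mapping.lookup (\<Sum>j\<in>{0..<r}. Poly_Mapping.single (f j (q j)) (1::nat)) (f i i)
      = (1 when q i = i)"
    if q: "q permutes {0..<r}" and i: "i < r" for q i
  proof -
    have "Poly_Mapping.lookup (\<Sum>j\<in>{0..<r}. Poly_Mapping.single (f j (q j)) (1::nat)) (f i i)
        = (\<Sum>j\<in>{0..<r}. (1::nat) when f j (q j) = f i i)"
      by (simp add: lookup_sum lookup_single)
    also have "\<dots> = (\<Sum>j\<in>{0..<r}. (1 when q i = i) when j = i)"
    proof (rule sum.cong)
      fix j assume "j \<in> {0..<r}"
      moreover have "q j < r"
        using permutes_in_image[OF q] \<open>j \<in> {0..<r}\<close> by auto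
      ultimately show "((1::nat) when f j (q j) = f i i) = ((1 when q i = i) when j = i)"
        using i inj_onD[OF inj, of "(j, q j)" "(i, i)"] by (auto simp: when_def)
    qed simp
    also have "\<dots> = (1 when q i = i)"
      using i by (simp add: when_def)
    finally show ?thesis .
  qed
  fix i show "p i = id i"
  proof (cases "i < r")
    case True
    then show ?thesis
      using lookup[OF p True] lookup[OF permutes_id True] eq by (auto simp: when_def split: if_splits)
  qed (use permutes_not_in[OF p] in auto)
qed

text \<open>The monomial \<open>\<Prod>i. X (f i i)\<close> of the diagonal arises from the identity permutation
  only, so its coefficient in the determinant is \<open>1\<close>.\<close>

lemma det_monomial_mat_neq_0:
  fixes f :: "nat \<Rightarrow> nat \<Rightarrow> nat"
  assumes inj: "inj_on (\<lambda>(i, t). f i t) ({..<r} \<times> {..<r})"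
  shows "det (mat r r (\<lambda>(i, t). Poly_Mapping.single (Poly_Mapping.single (f i t) 1) 1)
    :: ((nat \<Rightarrow>\<^sub>0 nat) \<Rightarrow>\<^sub>0 'a::field) mat) \<noteq> 0"
proof -
  define P :: "((nat \<Rightarrow>\<^sub>0 nat) \<Rightarrow>\<^sub>0 'a) mat"
    where "P = mat r r (\<lambda>(i, t). Poly_Mapping.single (Poly_Mapping.single (f i t) 1) 1)"
  define exps where "exps p = (\<Sum>i\<in>{0..<r}. Poly_Mapping.single (f i (p i)) (1::nat))"
    for p :: "nat \<Rightarrow> nat"
  have term_eq: "signof p * (\<Prod>i = 0..<r. P $$ (i, p i)) = Poly_Mapping.single (exps p) (signof p)"
    if p: "p permutes {0..<r}" for p
  proof -
    have "(\<Prod>i = 0..<r. P $$ (i, p i))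
        = (\<Prod>i = 0..<r. Poly_Mapping.single (Poly_Mapping.single (f i (p i)) (1::nat)) (1::'a))"
      by (rule prod.cong) (use permutes_in_image[OF p] in \<open>auto simp: P_def\<close>)
    also have "\<dots> = Poly_Mapping.single (exps p) 1"
      unfolding exps_def by (rule prod_single_one) simp
    finally show ?thesis
      by (simp del: single_of_int add: single_of_int[symmetric] mult_single)
  qed
  have "det P = (\<Sum>p\<in>{p. p permutes {0..<r}}. signof p * (\<Prod>i = 0..<r. P $$ (i, p i)))"
    unfolding det_def P_def by simp
  also have "\<dots> = (\<Sum>p\<in>{p. p permutes {0..<r}}. Poly_Mapping.single (exps p) (signof p))"
    by (rule sum.cong) (auto simp: term_eq)
  finally have "Poly_Mapping.lookup (det P) (exps id)
      = (\<Sum>p\<in>{p. p permutes {0..<r}}. signof p when exps p = exps id)"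
    by (simp add: lookup_sum lookup_single)
  also have "\<dots> = (\<Sum>p\<in>{p. p permutes {0..<r}}. if p = id then 1 else 0)"
    using permutes_eq_id_if_sum_single_eq[OF inj] unfolding exps_def
    by (intro sum.cong) (auto simp: when_def)
  also have "\<dots> = 1"
    by (simp add: finite_permutations)
  finally show ?thesis
    unfolding P_def by auto
qed

lemma det_indet_mat_neq_0:
  fixes f :: "nat \<Rightarrow> nat \<Rightarrow> nat"
  assumes "inj_on (\<lambda>(i, t). f i t) ({..<r} \<times> {..<r})"
  shows "det (mat r r (\<lambda>(i, t). indet (f i t)) :: 'a::field rat_fun mat) \<noteq> 0"
proof -
  let ?P = "mat r r (\<lambda>(i, t). Poly_Mapping.single (Poly_Mapping.single (f i t) 1) 1)
    :: ((nat \<Rightarrow>\<^sub>0 nat) \<Rightarrow>\<^sub>0 'a) mat"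
  have "mat r r (\<lambda>(i, t). indet (f i t)) = map_mat (\<lambda>a. Fract a 1) ?P"
    unfolding indet_def by (intro eq_matI) auto
  then have "det (mat r r (\<lambda>(i, t). indet (f i t)) :: 'a rat_fun mat) = Fract (det ?P) 1"
    using comm_ring_hom.hom_det[OF comm_ring_hom_Fract_one] by simp
  then show ?thesis
    using det_monomial_mat_neq_0[OF assms, where 'a = 'a] by (simp add: Zero_fract_def eq_fract)
qed

lemma mult_add_eq_mult_add_imp_eq:
  fixes i j a b N :: nat
  assumes "a < N" and "b < N" and "i * N + a = j * N + b"
  shows "i = j \<and> a = b"
proof -
  have "(i * N + a) div N = i" "(j * N + b) div N = j"
    "(i * N + a) mod N = a" "(j * N + b) mod N = b"
    using assms(1,2) by simp_all
  then show ?thesis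
    using assms(3) by metis
qed

lemma det_submat_cols_generic_neq_0:
  assumes U: "U \<subseteq> {..<N}"
  shows "det (submat_cols (generic_mat (card U) N :: 'a::field rat_fun mat) U) \<noteq> 0"
proof -
  let ?s = "sorted_list_of_set U"
  have "finite U"
    using U finite_subset by blast
  then have s: "?s ! t < N" if "t < card U" for t
    using nth_sorted_list_of_set_in that U by blast
  have "submat_cols (generic_mat (card U) N :: 'a rat_fun mat) U
      = mat (card U) (card U) (\<lambda>(i, t). indet (i * N + ?s ! t))"
    using s by (intro eq_matI) auto
  moreover have "inj_on (\<lambda>(i, t). i * N + ?s ! t) ({..<card U} \<times> {..<card U})"
  proof (rule inj_onI, clarsimp)
    fix i t i' t' assume t: "t < card U" "t' < card U" and "i * N + ?s ! t = i' * N + ?s ! t'"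
    then have "i = i'" "?s ! t = ?s ! t'"
      using mult_add_eq_mult_add_imp_eq s by blast+
    moreover have "distinct ?s" "length ?s = card U"
      by simp_all
    ultimately show "i = i' \<and> t = t'"
      using nth_eq_iff_index_eq[of ?s t t'] t by simp
  qed
  ultimately show ?thesis
    using det_indet_mat_neq_0[of "\<lambda>i t. i * N + ?s ! t" "card U"] by simp
qed

lemma cols_indep_on_generic_iff:
  assumes U: "U \<subseteq> {..<N}"
  shows "cols_indep_on (generic_mat m N :: 'a::field rat_fun mat) U \<longleftrightarrow> card U \<le> m"
proof
  assume "cols_indep_on (generic_mat m N :: 'a rat_fun mat) U"
  then show "card U \<le> m"
    using card_le_if_cols_indep_on[OF generic_mat_carrier(1) U] by blast
next
  assume "card U \<le> m"
  have "finite U"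
    using U finite_subset by blast
  then have sN: "sorted_list_of_set U ! t < N" if "t < card U" for t
    using nth_sorted_list_of_set_in that U by blast
  let ?S = "submat_cols (generic_mat m N :: 'a rat_fun mat) U"
  let ?Q = "submat_cols (generic_mat (card U) N :: 'a rat_fun mat) U"
  have "?Q \<in> carrier_mat (card U) (card U)"
    by (rule carrier_matI) simp_all
  then have Q: "inj_mat ?Q"
    by (rule inj_mat_if_det_neq_0) (rule det_submat_cols_generic_neq_0[OF U])
  have "inj_mat ?S"
    unfolding inj_mat_def
  proof (intro ballI impI)
    fix y assume y: "y \<in> carrier_vec (dim_col ?S)" and "?S *\<^sub>v y = 0\<^sub>v (dim_row ?S)"
    have "(?Q *\<^sub>v y) $ i = (?S *\<^sub>v y) $ i" if "i < card U" for i
    proof -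
      have "row ?Q i = row ?S i"
        using that \<open>card U \<le> m\<close> sN by (intro eq_vecI) simp_all
      then show ?thesis
        using that \<open>card U \<le> m\<close> by simp
    qed
    then have "?Q *\<^sub>v y = 0\<^sub>v (card U)"
      using \<open>?S *\<^sub>v y = 0\<^sub>v (dim_row ?S)\<close> \<open>card U \<le> m\<close> by (intro eq_vecI) simp_all
    then show "y = 0\<^sub>v (dim_col ?S)"
      using Q y unfolding inj_mat_def by simp
  qed
  then show "cols_indep_on (generic_mat m N :: 'a rat_fun mat) U"
    using cols_indep_on_iff_inj_mat[OF generic_mat_carrier(1) U] by blast
qed

lemma cols_span_on_generic_iff:
  assumes U: "U \<subseteq> {..<N}"
  shows "cols_span_on (generic_mat m N :: 'a::field rat_fun mat) U \<longleftrightarrow> m \<le> card U"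
proof
  assume "cols_span_on (generic_mat m N :: 'a rat_fun mat) U"
  then show "m \<le> card U"
    using card_ge_if_cols_span_on[OF generic_mat_carrier(1) U] by blast
next
  assume "m \<le> card U"
  then obtain U' where U': "U' \<subseteq> U" "card U' = m"
    by (meson obtain_subset_with_card_n)
  then have "U' \<subseteq> {..<N}"
    using U by blast
  let ?S = "submat_cols (generic_mat m N :: 'a rat_fun mat) U'"
  have "?S \<in> carrier_mat m m"
    using U'(2) by (intro carrier_matI) simp_all
  moreover have "det ?S \<noteq> 0"
    using det_submat_cols_generic_neq_0[OF \<open>U' \<subseteq> {..<N}\<close>] U'(2) by simp
  ultimately have "inj_mat ?S"
    by (rule inj_mat_if_det_neq_0)
  then have "surj_mat ?S"
    using square_inj_mat_iff_surj_mat[of ?S] U'(2) by simp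
  then have "cols_span_on (generic_mat m N :: 'a rat_fun mat) U'"
    using cols_span_on_iff_surj_mat[OF generic_mat_carrier(1) \<open>U' \<subseteq> {..<N}\<close>] by blast
  then show "cols_span_on (generic_mat m N :: 'a rat_fun mat) U"
    using cols_span_on_mono U'(1) by blast
qed

section \<open>Duality between a code and its dual\<close>

lemma transpose_submat_cols_mult_eq_0_iff:
  assumes "finite A" and "y \<in> carrier_vec (dim_row M)"
  shows "transpose_mat (submat_cols M A) *\<^sub>v y = 0\<^sub>v (card A) \<longleftrightarrow> (\<forall>l\<in>A. col M l \<bullet> y = 0)"
proof -
  have "transpose_mat (submat_cols M A) *\<^sub>v y = 0\<^sub>v (card A)
      \<longleftrightarrow> (\<forall>t<card A. col M (sorted_list_of_set A ! t) \<bullet> y = 0)"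
    by (auto simp: vec_eq_iff col_submat_cols)
  also have "\<dots> \<longleftrightarrow> (\<forall>l\<in>A. col M l \<bullet> y = 0)"
    using nth_sorted_list_of_set_in[OF assms(1)] obtain_index_sorted_list_of_set[OF assms(1)]
    by metis
  finally show ?thesis .
qed

lemma surj_mat_imp_inj_mat_transpose:
  fixes A :: "'a::comm_ring_1 mat"
  assumes A: "A \<in> carrier_mat m c" and surj: "surj_mat A"
  shows "inj_mat (transpose_mat A)"
  unfolding inj_mat_def
proof (intro ballI impI)
  fix y assume y: "y \<in> carrier_vec (dim_col (transpose_mat A))"
    and "transpose_mat A *\<^sub>v y = 0\<^sub>v (dim_row (transpose_mat A))"
  then have y: "y \<in> carrier_vec m" and Ay: "transpose_mat A *\<^sub>v y = 0\<^sub>v c"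
    using A by auto
  have "y $ i = 0" if "i < m" for i
  proof -
    obtain w where w: "w \<in> carrier_vec c" "A *\<^sub>v w = unit_vec m i"
      using surj A unfolding surj_mat_def by fastforce
    have "y $ i = unit_vec m i \<bullet> y"
      using y that by simp
    also have "\<dots> = (transpose_mat A *\<^sub>v y) \<bullet> w"
      using transpose_vec_mult_scalar[OF A w(1) y] comm_scalar_prod[OF mult_mat_vec_carrier[OF A w(1)] y]
        w(2) by simp
    finally show ?thesis
      using Ay w by simp
  qed
  then show "y = 0\<^sub>v (dim_col (transpose_mat A))"
    using y A by (intro eq_vecI) auto
qed

lemma scalar_prod_col_eq_0_if_dependent:
  fixes A :: "'a::field mat"
  assumes A: "A \<in> carrier_mat m c" and "j < c"
    and indep: "cols_indep_on A J" and dep: "\<not> cols_indep_on A (insert j J)"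
    and y: "y \<in> carrier_vec m" and orth: "\<forall>l\<in>J. col A l \<bullet> y = 0"
  shows "col A j \<bullet> y = 0"
proof -
  obtain x where x: "x \<in> carrier_vec c" "supported_on x (insert j J)"
    and "A *\<^sub>v x = 0\<^sub>v m" "x \<noteq> 0\<^sub>v c"
    using dep A unfolding cols_indep_on_def by auto
  then have "x $ j \<noteq> 0"
    using indep A unfolding cols_indep_on_def supported_on_def by auto
  have "0 = (A *\<^sub>v x) \<bullet> y"
    using \<open>A *\<^sub>v x = 0\<^sub>v m\<close> y by simp
  also have "\<dots> = (\<Sum>l<c. if l = j then x $ j * (col A j \<bullet> y) else 0)"
    using x orth unfolding mult_mat_vec_scalar_prod[OF A x(1) y] supported_on_def
    by (intro sum.cong) auto
  also have "\<dots> = x $ j * (col A j \<bullet> y)"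
    using \<open>j < c\<close> by simp
  finally show ?thesis
    using \<open>x $ j \<noteq> 0\<close> by simp
qed

lemma obtain_maximal_cols_indep_on:
  assumes "finite U"
  obtains J where "J \<subseteq> U" "cols_indep_on A J"
    and "\<And>j. j \<in> U \<Longrightarrow> j \<notin> J \<Longrightarrow> \<not> cols_indep_on A (insert j J)"
proof -
  let ?P = "\<lambda>J. J \<subseteq> U \<and> cols_indep_on A J"
  have "?P {}"
    unfolding cols_indep_on_def supported_on_def by auto
  moreover have "\<forall>J. ?P J \<longrightarrow> card J < Suc (card U)"
    using card_mono[OF assms] by (simp add: le_imp_less_Suc)
  ultimately obtain J where J: "?P J" and max: "\<And>J'. ?P J' \<Longrightarrow> card J' \<le> card J"
    using ex_has_greatest_nat[of ?P "{}" card "Suc (card U)"] by blast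
  have "finite J"
    using J assms finite_subset by blast
  have "\<not> cols_indep_on A (insert j J)" if "j \<in> U" "j \<notin> J" for j
  proof
    assume "cols_indep_on A (insert j J)"
    then have "card (insert j J) \<le> card J"
      using max J that by blast
    then show False
      using \<open>finite J\<close> \<open>j \<notin> J\<close> by simp
  qed
  then show thesis
    using that J by blast
qed

text \<open>The hypothesis says that no nonzero vector is orthogonal to all columns in \<open>U\<close>; a
  maximal independent \<open>J \<subseteq> U\<close> has the same orthogonal vectors, hence is a basis.\<close>

lemma obtain_basis_cols:
  fixes A :: "'a::field mat"
  assumes A: "A \<in> carrier_mat m c" and U: "U \<subseteq> {..<c}"
    and inj: "inj_mat (transpose_mat (submat_cols A U))"
  obtains J where "J \<subseteq> U" "card J = m" "cols_indep_on A J"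
proof -
  have "finite U"
    using U finite_subset by blast
  then obtain J where J: "J \<subseteq> U" "cols_indep_on A J"
    and max: "\<And>j. j \<in> U \<Longrightarrow> j \<notin> J \<Longrightarrow> \<not> cols_indep_on A (insert j J)"
    using obtain_maximal_cols_indep_on by blast
  then have "J \<subseteq> {..<c}" "finite J"
    using U \<open>finite U\<close> finite_subset by auto
  have "inj_mat (transpose_mat (submat_cols A J))"
    unfolding inj_mat_def
  proof (intro ballI impI)
    fix y assume "y \<in> carrier_vec (dim_col (transpose_mat (submat_cols A J)))"
      and "transpose_mat (submat_cols A J) *\<^sub>v y = 0\<^sub>v (dim_row (transpose_mat (submat_cols A J)))"
    then have y: "y \<in> carrier_vec m" and orth: "\<forall>l\<in>J. col A l \<bullet> y = 0"
      using A transpose_submat_cols_mult_eq_0_iff[OF \<open>finite J\<close>] by auto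
    have "col A j \<bullet> y = 0" if "j \<in> U" for j
      using scalar_prod_col_eq_0_if_dependent[OF A _ J(2) max y orth] orth that U
      by (cases "j \<in> J") auto
    then have "transpose_mat (submat_cols A U) *\<^sub>v y = 0\<^sub>v (card U)"
      using transpose_submat_cols_mult_eq_0_iff[OF \<open>finite U\<close>, of y A] y A by simp
    then show "y = 0\<^sub>v (dim_col (transpose_mat (submat_cols A J)))"
      using inj y A unfolding inj_mat_def by auto
  qed
  then have "m \<le> card J"
    using inj_mat_imp_dim_col_le A by fastforce
  moreover have "card J \<le> m"
    using card_le_if_cols_indep_on[OF A \<open>J \<subseteq> {..<c}\<close>] J by blast
  ultimately show thesis
    using that[of J] J by simp
qed

lemma surj_mat_iff_inj_mat_transpose:
  fixes A :: "'a::field mat"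
  assumes A: "A \<in> carrier_mat m c"
  shows "surj_mat A \<longleftrightarrow> inj_mat (transpose_mat A)"
proof
  assume "inj_mat (transpose_mat A)"
  then obtain J where J: "J \<subseteq> {..<c}" "card J = m" "cols_indep_on A J"
    using obtain_basis_cols[OF A, of "{..<c}"] submat_cols_lessThan[of A] A by auto
  then have "inj_mat (submat_cols A J)"
    using cols_indep_on_iff_inj_mat[OF A] by blast
  then have "surj_mat (submat_cols A J)"
    using square_inj_mat_iff_surj_mat[of "submat_cols A J"] A J(2) by simp
  then have "cols_span_on A J"
    using cols_span_on_iff_surj_mat[OF A J(1)] by blast
  then show "surj_mat A"
    unfolding cols_span_on_def surj_mat_def by blast
qed (rule surj_mat_imp_inj_mat_transpose[OF A])

lemma cols_span_on_compl_if_cols_indep_on: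
  fixes V H :: "'a::field mat"
  assumes V: "V \<in> carrier_mat k n" and H: "H \<in> carrier_mat h n" and "surj_mat H"
    and VH: "V * transpose_mat H = 0\<^sub>m k h"
    and T: "T \<subseteq> {..<n}" and indep: "cols_indep_on V T"
  shows "cols_span_on H ({..<n} - T)"
proof -
  let ?S = "{..<n} - T"
  have "finite ?S" "?S \<subseteq> {..<n}"
    by auto
  have "inj_mat (transpose_mat (submat_cols H ?S))"
    unfolding inj_mat_def
  proof (intro ballI impI)
    fix y assume "y \<in> carrier_vec (dim_col (transpose_mat (submat_cols H ?S)))"
      and "transpose_mat (submat_cols H ?S) *\<^sub>v y = 0\<^sub>v (dim_row (transpose_mat (submat_cols H ?S)))"
    then have y: "y \<in> carrier_vec h" and orth: "\<forall>l\<in>?S. col H l \<bullet> y = 0"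
      using H transpose_submat_cols_mult_eq_0_iff[OF \<open>finite ?S\<close>, of y H] by auto
    let ?x = "transpose_mat H *\<^sub>v y"
    have "0\<^sub>m k h *\<^sub>v y = 0\<^sub>v k"
      using y by (intro eq_vecI) auto
    have "?x \<in> carrier_vec n"
      using H y by simp
    moreover have "supported_on ?x T"
      using orth H unfolding supported_on_def by auto
    moreover have "V *\<^sub>v ?x = 0\<^sub>v k"
      using assoc_mult_mat_vec[OF V _ y, of "transpose_mat H"] H VH \<open>0\<^sub>m k h *\<^sub>v y = 0\<^sub>v k\<close>
      by simp
    moreover have "\<forall>x\<in>carrier_vec n. supported_on x T \<longrightarrow> V *\<^sub>v x = 0\<^sub>v k \<longrightarrow> x = 0\<^sub>v n"
      using indep V unfolding cols_indep_on_def by simp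
    ultimately have "?x = 0\<^sub>v n"
      by blast
    then show "y = 0\<^sub>v (dim_col (transpose_mat (submat_cols H ?S)))"
      using surj_mat_imp_inj_mat_transpose[OF H \<open>surj_mat H\<close>] y H unfolding inj_mat_def by auto
  qed
  moreover have "submat_cols H ?S \<in> carrier_mat h (card ?S)"
    using H by (intro carrier_matI) simp_all
  ultimately have "surj_mat (submat_cols H ?S)"
    using surj_mat_iff_inj_mat_transpose by blast
  then show ?thesis
    using cols_span_on_iff_surj_mat[OF H \<open>?S \<subseteq> {..<n}\<close>] by blast
qed

lemma cols_indep_on_iff_cols_span_on_compl:
  fixes V H :: "'a::field mat"
  assumes V: "V \<in> carrier_mat k n" and H: "H \<in> carrier_mat (n - k) n" and "k \<le> n"
    and "surj_mat V" and "surj_mat H" and VH: "V * transpose_mat H = 0\<^sub>m k (n - k)"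
    and T: "T \<subseteq> {..<n}"
  shows "cols_indep_on V T \<longleftrightarrow> cols_span_on H ({..<n} - T)"
proof
  assume "cols_indep_on V T"
  then show "cols_span_on H ({..<n} - T)"
    by (rule cols_span_on_compl_if_cols_indep_on[OF V H \<open>surj_mat H\<close> VH T])
next
  let ?U = "{..<n} - T"
  have U: "?U \<subseteq> {..<n}"
    by auto
  assume "cols_span_on H ?U"
  then have "surj_mat (submat_cols H ?U)"
    using cols_span_on_iff_surj_mat[OF H U] by simp
  moreover have "submat_cols H ?U \<in> carrier_mat (n - k) (card ?U)"
    using H by (intro carrier_matI) simp_all
  ultimately have "inj_mat (transpose_mat (submat_cols H ?U))"
    using surj_mat_imp_inj_mat_transpose by blast
  then obtain J where J: "J \<subseteq> ?U" "card J = n - k" "cols_indep_on H J"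
    using obtain_basis_cols[OF H U] by blast
  then have "J \<subseteq> {..<n}" "finite J"
    using finite_subset by auto
  have "H * transpose_mat V = transpose_mat (V * transpose_mat H)"
    using transpose_mult[OF V, of "transpose_mat H"] H by simp
  then have "H * transpose_mat V = 0\<^sub>m (n - k) k"
    unfolding VH by simp
  then have "cols_span_on V ({..<n} - J)"
    using cols_span_on_compl_if_cols_indep_on[OF H V \<open>surj_mat V\<close> _ \<open>J \<subseteq> {..<n}\<close> J(3)] by blast
  then have "surj_mat (submat_cols V ({..<n} - J))"
    using cols_span_on_iff_surj_mat[OF V, of "{..<n} - J"] by simp
  moreover have "card ({..<n} - J) = k"
    using card_Diff_subset[OF \<open>finite J\<close> \<open>J \<subseteq> {..<n}\<close>] J(2) \<open>k \<le> n\<close> by simp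
  ultimately have "inj_mat (submat_cols V ({..<n} - J))"
    using square_inj_mat_iff_surj_mat[of "submat_cols V ({..<n} - J)"] V by simp
  then have "cols_indep_on V ({..<n} - J)"
    using cols_indep_on_iff_inj_mat[OF V, of "{..<n} - J"] by simp
  then show "cols_indep_on V T"
    using cols_indep_on_subset J(1) T by blast
qed

lemma rMDS_sub2_iff:
  fixes M :: "'a::field mat"
  assumes M: "M \<in> carrier_mat k n"
  shows "rMDS_sub2 d M \<longleftrightarrow> (\<forall>T\<subseteq>{..<n}. card T \<le> k - d \<longrightarrow> cols_indep_on M T)"
proof -
  let ?W = "generic_mat (k - d) n :: 'a rat_fun mat"
  have W: "full_col_rank (Gmat ?W [A1, A2]) \<longleftrightarrow> A1 \<inter> A2 = {} \<and> card (A1 \<union> A2) \<le> k - d"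
    if "A1 \<subseteq> {..<n}" "A2 \<subseteq> {..<n}" for A1 A2
  proof -
    have "A1 \<union> A2 \<subseteq> {..<n}"
      using that by blast
    then show ?thesis
      using full_col_rank_Gmat_iff[OF generic_mat_carrier(1) that] cols_indep_on_generic_iff by blast
  qed
  have V: "full_col_rank (Gmat M [A1, A2]) \<longleftrightarrow> A1 \<inter> A2 = {} \<and> cols_indep_on M (A1 \<union> A2)"
    if "A1 \<subseteq> {..<n}" "A2 \<subseteq> {..<n}" for A1 A2
    using full_col_rank_Gmat_iff[OF M that] .
  show ?thesis
  proof
    assume "rMDS_sub2 d M"
    then have "full_col_rank (Gmat M [T, {}])" if "T \<subseteq> {..<n}" "card T \<le> k - d" for T
      using that W[of T "{}"] M unfolding rMDS_sub2_def by simp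
    then show "\<forall>T\<subseteq>{..<n}. card T \<le> k - d \<longrightarrow> cols_indep_on M T"
      using V by auto
  next
    assume "\<forall>T\<subseteq>{..<n}. card T \<le> k - d \<longrightarrow> cols_indep_on M T"
    then show "rMDS_sub2 d M"
      unfolding rMDS_sub2_def using M W V by auto
  qed
qed

lemma rMDS_sup2_iff:
  fixes M :: "'a::field mat"
  assumes M: "M \<in> carrier_mat h n"
  shows "rMDS_sup2 d M \<longleftrightarrow> (\<forall>U\<subseteq>{..<n}. h + d \<le> card U \<longrightarrow> cols_span_on M U)"
proof -
  have W: "sat_prop TYPE('a) (h + d) n [A1, A2] \<longleftrightarrow> h + d \<le> card (A1 \<union> A2)"
    if "A1 \<subseteq> {..<n}" "A2 \<subseteq> {..<n}" for A1 A2
  proof -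
    have "A1 \<union> A2 \<subseteq> {..<n}"
      using that by blast
    then show ?thesis
      using saturated_Gmat_iff[OF generic_mat_carrier(1) that] cols_span_on_generic_iff
      unfolding sat_prop_def by blast
  qed
  show ?thesis
  proof
    assume "rMDS_sup2 d M"
    then have "saturated M [U, {}]" if "U \<subseteq> {..<n}" "h + d \<le> card U" for U
      using that W[of U "{}"] M unfolding rMDS_sup2_def by simp
    then show "\<forall>U\<subseteq>{..<n}. h + d \<le> card U \<longrightarrow> cols_span_on M U"
      using saturated_Gmat_iff[OF M] by auto
  next
    assume "\<forall>U\<subseteq>{..<n}. h + d \<le> card U \<longrightarrow> cols_span_on M U"
    then show "rMDS_sup2 d M"
      unfolding rMDS_sup2_def using M W saturated_Gmat_iff[OF M] by auto
  qed
qed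

lemma all_card_le_compl_iff:
  assumes "m \<le> n"
  shows "(\<forall>T\<subseteq>{..<n}. card T \<le> m \<longrightarrow> P ({..<n} - T)) \<longleftrightarrow> (\<forall>U\<subseteq>{..<n}. n - m \<le> card U \<longrightarrow> P U)"
proof -
  have card_compl: "card ({..<n} - T) = n - card T" "card T \<le> n" if "T \<subseteq> {..<n}" for T
    using card_Diff_subset[OF finite_subset[OF that] that] card_mono[OF _ that] by simp_all
  show ?thesis
  proof (intro iffI allI impI)
    fix U assume "\<forall>T\<subseteq>{..<n}. card T \<le> m \<longrightarrow> P ({..<n} - T)" "U \<subseteq> {..<n}" "n - m \<le> card U"
    moreover have "{..<n} - ({..<n} - U) = U"
      using \<open>U \<subseteq> {..<n}\<close> by blast
    ultimately show "P U"
      using card_compl[of U] assms by (metis Diff_subset diff_diff_cancel diff_le_mono2)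
  next
    fix T assume "\<forall>U\<subseteq>{..<n}. n - m \<le> card U \<longrightarrow> P U" "T \<subseteq> {..<n}" "card T \<le> m"
    then show "P ({..<n} - T)"
      using card_compl[of T] by simp
  qed
qed

theorem proposition3p6:
  fixes V H :: "'a::field mat" and n k d :: nat
  assumes "V \<in> carrier_mat k n" and "mrank V = k"
    and "H \<in> carrier_mat (n - k) n" and "mrank H = n - k"
    and "V * transpose_mat H = 0\<^sub>m k (n - k)"
    and "d \<le> k"
  shows "rMDS_sub2 d V \<longleftrightarrow> rMDS_sup2 d H"
proof -
  have "k \<le> n"
    using mrank_le_dim_col[of V] assms(1,2) by simp
  have "surj_mat V" "surj_mat H"
    using mrank_eq_dim_row_iff_surj_mat[of V] mrank_eq_dim_row_iff_surj_mat[of H] assms(1-4) by simp_all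
  have "rMDS_sub2 d V \<longleftrightarrow> (\<forall>T\<subseteq>{..<n}. card T \<le> k - d \<longrightarrow> cols_span_on H ({..<n} - T))"
    unfolding rMDS_sub2_iff[OF assms(1)]
    using cols_indep_on_iff_cols_span_on_compl[OF assms(1,3) \<open>k \<le> n\<close> \<open>surj_mat V\<close> \<open>surj_mat H\<close> assms(5)]
    by blast
  also have "\<dots> \<longleftrightarrow> (\<forall>U\<subseteq>{..<n}. n - k + d \<le> card U \<longrightarrow> cols_span_on H U)"
    using all_card_le_compl_iff[of "k - d" n] \<open>k \<le> n\<close> \<open>d \<le> k\<close> by simp
  also have "\<dots> \<longleftrightarrow> rMDS_sup2 d H"
    unfolding rMDS_sup2_iff[OF assms(3)] ..
  finally show ?thesis .
qed

end
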